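(* TC-Approval is monotonic, while UC-Approval and CO-Approval are not monotonic.
   Context: A tournament $T=(V(T),\succ)$ is a finite set of candidates with an asymmetric and complete binary relation $\succ$; $N^+_T(c)=\{b:c\succ b\}$ and $T[B]$ is the induced subtournament. Tournament solutions: the top cycle $TC(T)$ is the unique minimal nonempty $X\subseteq V(T)$ with $x\succ y$ for all $x\in X$, $y\notin X$; the Copeland set $CO(T)$ is the set of candidates of maximum outdegree; the uncovered set $UC(T)$ is the set of kings, where $a$ is a king if for every $b\neq a$, either $a\succ b$ or there is $c$ with $a\succ c\succ b$. An election $\mathcal{E}=(\mathcal{C},\mathcal{T})$ has a finite candidate set and a finite list of votes, each a tournament on $\mathcal{C}$. For a tournament solution $f$, $f$-Approval gives candidate $c$ score $|\{T\in\mathcal{T}: c\in f(T)\}|$ (with multiplicity); winners are those of highest score. A voting correspondence $\varphi$ is monotonic if for every two elections $\mathcal{E}=(\mathcal{C},(T_1,\dots,T_n))$, $\mathcal{E}'=(\mathcal{C},(T'_1,\dots,T'_n))$ and every $c\in\varphi(\mathcal{E})$ such that for every $i$, $T_i[\mathcal{C}\setminus\{c\}]=T'_i[\mathcal{C}\setminus\{c\}]$ and $N^+_{T_i}(c)\subseteq N^+_{T'_i}(c)$, it holds that $c\in\varphi(\mathcal{E}')$. *)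

theory Defs
  imports Main
begin

definition tournament :: "'a set \<Rightarrow> 'a rel \<Rightarrow> bool" where
  "tournament V R \<longleftrightarrow> finite V \<and> R \<subseteq> V \<times> V
     \<and> (\<forall>x y. (x, y) \<in> R \<longrightarrow> (y, x) \<notin> R)
     \<and> (\<forall>x\<in>V. \<forall>y\<in>V. x \<noteq> y \<longrightarrow> (x, y) \<in> R \<or> (y, x) \<in> R)"

definition out_nbhd :: "'a rel \<Rightarrow> 'a \<Rightarrow> 'a set" where
  "out_nbhd R c = {b. (c, b) \<in> R}"

definition induced :: "'a rel \<Rightarrow> 'a set \<Rightarrow> 'a rel" where
  "induced R B = R \<inter> (B \<times> B)"

definition dominant :: "'a set \<Rightarrow> 'a rel \<Rightarrow> 'a set \<Rightarrow> bool" where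
  "dominant V R X \<longleftrightarrow> X \<subseteq> V \<and> X \<noteq> {} \<and> (\<forall>x\<in>X. \<forall>y\<in>V - X. (x, y) \<in> R)"

definition top_cycle :: "'a set \<Rightarrow> 'a rel \<Rightarrow> 'a set" where
  "top_cycle V R = (THE X. dominant V R X \<and> (\<forall>Y. dominant V R Y \<longrightarrow> \<not> Y \<subset> X))"

definition copeland :: "'a set \<Rightarrow> 'a rel \<Rightarrow> 'a set" where
  "copeland V R = {c \<in> V. \<forall>d \<in> V. card (out_nbhd R d) \<le> card (out_nbhd R c)}"

definition uncovered :: "'a set \<Rightarrow> 'a rel \<Rightarrow> 'a set" where
  "uncovered V R = {a \<in> V. \<forall>b \<in> V. b \<noteq> a \<longrightarrow>
      (a, b) \<in> R \<or> (\<exists>c \<in> V. (a, c) \<in> R \<and> (c, b) \<in> R)}"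

definition election :: "'a set \<Rightarrow> 'a rel list \<Rightarrow> bool" where
  "election C Ts \<longleftrightarrow> finite C \<and> C \<noteq> {} \<and> (\<forall>T \<in> set Ts. tournament C T)"

definition approval_score :: "('a set \<Rightarrow> 'a rel \<Rightarrow> 'a set) \<Rightarrow> 'a set \<Rightarrow> 'a rel list \<Rightarrow> 'a \<Rightarrow> nat" where
  "approval_score f C Ts c = length (filter (\<lambda>T. c \<in> f C T) Ts)"

definition approval :: "('a set \<Rightarrow> 'a rel \<Rightarrow> 'a set) \<Rightarrow> 'a set \<Rightarrow> 'a rel list \<Rightarrow> 'a set" where
  "approval f C Ts = {c \<in> C. \<forall>d \<in> C. approval_score f C Ts d \<le> approval_score f C Ts c}"

definition monotonic :: "('a set \<Rightarrow> 'a rel list \<Rightarrow> 'a set) \<Rightarrow> bool" where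
  "monotonic \<phi> \<longleftrightarrow> (\<forall>C Ts Ts' c.
      election C Ts \<and> election C Ts' \<and> length Ts = length Ts' \<and> c \<in> \<phi> C Ts \<and>
      (\<forall>i < length Ts. induced (Ts ! i) (C - {c}) = induced (Ts' ! i) (C - {c})
                      \<and> out_nbhd (Ts ! i) c \<subseteq> out_nbhd (Ts' ! i) c)
      \<longrightarrow> c \<in> \<phi> C Ts')"

end

theory Submission
  imports Defs
begin

text \<open>In a tournament the dominant sets form a chain, so the top cycle is the least dominant
set. Strengthening a candidate c in one vote only affects edges at c: a dominant set
containing c stays dominant, and a dominant set avoiding c was dominant before. Hence if c
was in the top cycle it stays there while the top cycle can only shrink, and if c is outside
the new top cycle then the top cycle did not change at all. So no rival gains an approval
point without c gaining one as well, which gives monotonicity of TC-Approval.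
For the uncovered set and the Copeland set, small explicit elections show that strengthening
the winner c can let a rival gain a point in a vote where c gains nothing.\<close>

definition reinforces :: "'a set \<Rightarrow> 'a \<Rightarrow> 'a rel \<Rightarrow> 'a rel \<Rightarrow> bool" where
  "reinforces C c T T' \<longleftrightarrow>
     induced T (C - {c}) = induced T' (C - {c}) \<and> out_nbhd T c \<subseteq> out_nbhd T' c"

lemma tournament_asym: "tournament V R \<Longrightarrow> (x, y) \<in> R \<Longrightarrow> (y, x) \<notin> R"
  unfolding tournament_def by blast

lemma tournament_complete:
  "tournament V R \<Longrightarrow> x \<in> V \<Longrightarrow> y \<in> V \<Longrightarrow> x \<noteq> y \<Longrightarrow> (x, y) \<in> R \<or> (y, x) \<in> R"
  unfolding tournament_def by blast

lemma dominant_chain: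
  assumes "tournament V R" "dominant V R X" "dominant V R Y"
  shows "X \<subseteq> Y \<or> Y \<subseteq> X"
proof (rule ccontr)
  assume "\<not> (X \<subseteq> Y \<or> Y \<subseteq> X)"
  then obtain x y where "x \<in> X" "x \<notin> Y" "y \<in> Y" "y \<notin> X" by blast
  with assms(2,3) have "(x, y) \<in> R" "(y, x) \<in> R" unfolding dominant_def by blast+
  with tournament_asym[OF assms(1)] show False by blast
qed

lemma ex_least_dominant:
  assumes "tournament V R" "V \<noteq> {}"
  obtains X where "dominant V R X" "\<And>Y. dominant V R Y \<Longrightarrow> X \<subseteq> Y"
proof -
  have "dominant V R V" using assms(2) by (simp add: dominant_def)
  then obtain X where X: "dominant V R X"
    and min_card: "\<And>Y. dominant V R Y \<Longrightarrow> card X \<le> card Y"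
    using ex_has_least_nat[of "dominant V R" V card] by blast
  have "X \<subseteq> Y" if Y: "dominant V R Y" for Y
  proof (rule ccontr)
    assume "\<not> X \<subseteq> Y"
    with dominant_chain[OF assms(1) X Y] have "Y \<subset> X" by blast
    moreover have "finite X"
      using X assms(1) by (auto simp: dominant_def tournament_def intro: finite_subset)
    ultimately have "card Y < card X" by (simp add: psubset_card_mono)
    with min_card[OF Y] show False by simp
  qed
  with X show thesis by (rule that)
qed

lemma
  assumes "tournament V R" "V \<noteq> {}"
  shows dominant_top_cycle: "dominant V R (top_cycle V R)"
    and top_cycle_least: "dominant V R Y \<Longrightarrow> top_cycle V R \<subseteq> Y"
proof -
  obtain X where X: "dominant V R X" "\<And>Y. dominant V R Y \<Longrightarrow> X \<subseteq> Y"
    using ex_least_dominant[OF assms] by blast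
  have "top_cycle V R = X"
    unfolding top_cycle_def by (rule the_equality) (use X in blast)+
  with X show "dominant V R (top_cycle V R)" "dominant V R Y \<Longrightarrow> top_cycle V R \<subseteq> Y"
    by auto
qed

lemma
  assumes "reinforces C c T T'"
  shows reinforces_edge_iff:
      "x \<in> C - {c} \<Longrightarrow> y \<in> C - {c} \<Longrightarrow> (x, y) \<in> T' \<longleftrightarrow> (x, y) \<in> T"
    and reinforces_out_edge: "(c, y) \<in> T \<Longrightarrow> (c, y) \<in> T'"
  using assms unfolding reinforces_def induced_def out_nbhd_def by blast+

lemma reinforces_in_edge:
  assumes "reinforces C c T T'" "tournament C T" "tournament C T'"
    and "(y, c) \<in> T'" "y \<in> C"
  shows "(y, c) \<in> T"
proof -
  have "(c, y) \<notin> T"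
    using assms(4) tournament_asym[OF assms(3)] reinforces_out_edge[OF assms(1)] by blast
  moreover have "c \<in> C" "y \<noteq> c"
    using assms(3,4) tournament_asym[OF assms(3)] by (auto simp: tournament_def)
  ultimately show ?thesis using tournament_complete[OF assms(2) \<open>y \<in> C\<close>] by blast
qed

lemma dominant_reinforced:
  assumes "reinforces C c T T'" "dominant C T X" "c \<in> X"
  shows "dominant C T' X"
  unfolding dominant_def
proof (intro conjI ballI)
  show "X \<subseteq> C" "X \<noteq> {}" using assms(2) by (auto simp: dominant_def)
  fix x y assume x: "x \<in> X" and y: "y \<in> C - X"
  have "(x, y) \<in> T" "x \<in> C" "y \<noteq> c" using assms(2,3) x y by (auto simp: dominant_def)
  then show "(x, y) \<in> T'"
    using y reinforces_out_edge[OF assms(1)] reinforces_edge_iff[OF assms(1), of x y]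
    by (cases "x = c") auto
qed

lemma dominant_unreinforced:
  assumes "reinforces C c T T'" "tournament C T" "tournament C T'"
    and "dominant C T' X" "c \<notin> X"
  shows "dominant C T X"
  unfolding dominant_def
proof (intro conjI ballI)
  show "X \<subseteq> C" "X \<noteq> {}" using assms(4) by (auto simp: dominant_def)
  fix x y assume x: "x \<in> X" and y: "y \<in> C - X"
  have "(x, y) \<in> T'" "x \<in> C" "x \<noteq> c" using assms(4,5) x y by (auto simp: dominant_def)
  then show "(x, y) \<in> T"
    using y reinforces_in_edge[OF assms(1-3)] reinforces_edge_iff[OF assms(1), of x y]
    by (cases "y = c") auto
qed

lemma top_cycle_reinforced:
  assumes "reinforces C c T T'" "tournament C T" "tournament C T'" "C \<noteq> {}"
  shows top_cycle_reinforced_mem: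
      "c \<in> top_cycle C T \<Longrightarrow> c \<in> top_cycle C T' \<and> top_cycle C T' \<subseteq> top_cycle C T"
    and top_cycle_reinforced_not_mem:
      "c \<notin> top_cycle C T' \<Longrightarrow> top_cycle C T' = top_cycle C T"
proof -
  let ?X = "top_cycle C T" and ?Y = "top_cycle C T'"
  note X = dominant_top_cycle[OF assms(2,4)] top_cycle_least[OF assms(2,4)]
  note Y = dominant_top_cycle[OF assms(3,4)] top_cycle_least[OF assms(3,4)]
  have X_sub_Y: "?X \<subseteq> ?Y" if "c \<notin> ?Y"
    using X(2) dominant_unreinforced[OF assms(1-3) Y(1) that] .
  show "c \<in> ?X \<Longrightarrow> c \<in> ?Y \<and> ?Y \<subseteq> ?X"
    using X_sub_Y Y(2)[OF dominant_reinforced[OF assms(1) X(1)]] by blast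
  assume c_notin_Y: "c \<notin> ?Y"
  have "dominant C T' ?X"
    unfolding dominant_def
  proof (intro conjI ballI)
    show "?X \<subseteq> C" "?X \<noteq> {}" using X(1) by (auto simp: dominant_def)
    fix x y assume x: "x \<in> ?X" and y: "y \<in> C - ?X"
    have "x \<in> ?Y" "x \<noteq> c" using x X_sub_Y[OF c_notin_Y] c_notin_Y by auto
    show "(x, y) \<in> T'"
    proof (cases "y = c")
      case True
      then show ?thesis using Y(1) \<open>x \<in> ?Y\<close> c_notin_Y y by (auto simp: dominant_def)
    next
      case False
      then show ?thesis using X(1) x y \<open>x \<noteq> c\<close> reinforces_edge_iff[OF assms(1)]
        by (auto simp: dominant_def)
    qed
  qed
  then show "?Y = ?X" using Y(2) X_sub_Y[OF c_notin_Y] by blast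
qed

lemma approval_score_Cons:
  "approval_score f C (T # Ts) c = of_bool (c \<in> f C T) + approval_score f C Ts c"
  by (simp add: approval_score_def)

text \<open>The vote-wise hypothesis says that d gains no more approval than c from T to T',
rearranged to avoid subtraction on nat.\<close>
lemma approval_score_exchange:
  assumes "list_all2 (\<lambda>T T'. of_bool (d \<in> f C T') + of_bool (c \<in> f C T)
                             \<le> of_bool (d \<in> f C T) + (of_bool (c \<in> f C T') :: nat)) Ts Ts'"
  shows "approval_score f C Ts' d + approval_score f C Ts c
       \<le> approval_score f C Ts d + approval_score f C Ts' c"
  using assms by (induction rule: list_all2_induct) (simp_all add: approval_score_Cons)

lemma monotonic_approvalI:
  assumes vote: "\<And>C T T' c d. tournament C T \<Longrightarrow> tournament C T' \<Longrightarrow> C \<noteq> {} \<Longrightarrow>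
      reinforces C c T T' \<Longrightarrow>
      of_bool (d \<in> f C T') + of_bool (c \<in> f C T) \<le> of_bool (d \<in> f C T) + (of_bool (c \<in> f C T') :: nat)"
  shows "monotonic (approval f)"
  unfolding monotonic_def
proof (intro allI impI, elim conjE)
  fix C Ts Ts' c
  assume E: "election C Ts" and E': "election C Ts'" and len: "length Ts = length Ts'"
    and c_wins: "c \<in> approval f C Ts"
    and reinf: "\<forall>i < length Ts. induced (Ts ! i) (C - {c}) = induced (Ts' ! i) (C - {c})
                      \<and> out_nbhd (Ts ! i) c \<subseteq> out_nbhd (Ts' ! i) c"
  have ne: "C \<noteq> {}" using E by (simp add: election_def)
  have votes: "list_all2 (\<lambda>T T'. tournament C T \<and> tournament C T' \<and> reinforces C c T T') Ts Ts'"
    using E E' len reinf by (auto simp: list_all2_conv_all_nth election_def reinforces_def)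
  have "approval_score f C Ts' d \<le> approval_score f C Ts' c" if "d \<in> C" for d
  proof -
    have "approval_score f C Ts' d + approval_score f C Ts c
        \<le> approval_score f C Ts d + approval_score f C Ts' c"
      by (rule approval_score_exchange, rule list_all2_mono[OF votes]) (blast intro: vote[OF _ _ ne])
    moreover have "approval_score f C Ts d \<le> approval_score f C Ts c"
      using c_wins that by (simp add: approval_def)
    ultimately show ?thesis by linarith
  qed
  then show "c \<in> approval f C Ts'" using c_wins by (simp add: approval_def)
qed

lemma monotonic_top_cycle_approval: "monotonic (approval top_cycle)"
proof (rule monotonic_approvalI)
  fix C :: "'a set" and T T' c d
  assume "tournament C T" "tournament C T'" "C \<noteq> {}" "reinforces C c T T'"
  from top_cycle_reinforced[OF this(4,1-3)]
  show "of_bool (d \<in> top_cycle C T') + of_bool (c \<in> top_cycle C T)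
      \<le> of_bool (d \<in> top_cycle C T) + (of_bool (c \<in> top_cycle C T') :: nat)"
    by (cases "c \<in> top_cycle C T"; cases "c \<in> top_cycle C T'") auto
qed

lemma out_nbhd_empty [simp]: "out_nbhd {} c = {}"
  by (simp add: out_nbhd_def)

lemma out_nbhd_insert [simp]:
  "out_nbhd (insert (a, b) R) c = (if a = c then insert b (out_nbhd R c) else out_nbhd R c)"
  by (auto simp: out_nbhd_def)

lemma not_monotonicI:
  assumes "election C Ts" "election C Ts'" "list_all2 (reinforces C c) Ts Ts'"
    and "c \<in> \<phi> C Ts" "c \<notin> \<phi> C Ts'"
  shows "\<not> monotonic \<phi>"
  using assms unfolding monotonic_def list_all2_conv_all_nth reinforces_def by blast

text \<open>All five candidates tie with one approval each. Raising 0 over 3 in the second vote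
makes 2 a king there (via 2, 0, 3), while 0 still cannot reach 4 in two steps.\<close>
lemma not_monotonic_uncovered_approval:
  "\<not> monotonic (approval (uncovered :: nat set \<Rightarrow> nat rel \<Rightarrow> nat set))"
proof (rule not_monotonicI[where C = "{0, 1, 2, 3, 4}" and c = 0
   and Ts = "[{(1, 0), (2, 0), (2, 1), (2, 3), (2, 4), (3, 0), (3, 1), (4, 0), (4, 1), (4, 3)},
              {(1, 0), (1, 4), (2, 0), (2, 1), (3, 0), (3, 1), (3, 2), (4, 0), (4, 2), (4, 3)},
              {(0, 1), (0, 2), (0, 3), (0, 4), (2, 1), (3, 1), (3, 2), (4, 1), (4, 2), (4, 3)}]"
   and Ts' = "[{(1, 0), (2, 0), (2, 1), (2, 3), (2, 4), (3, 0), (3, 1), (4, 0), (4, 1), (4, 3)},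
               {(0, 3), (1, 0), (1, 4), (2, 0), (2, 1), (3, 1), (3, 2), (4, 0), (4, 2), (4, 3)},
               {(0, 1), (0, 2), (0, 3), (0, 4), (2, 1), (3, 1), (3, 2), (4, 1), (4, 2), (4, 3)}]"])
qed (auto simp: election_def tournament_def reinforces_def induced_def
      approval_def approval_score_def uncovered_def)

text \<open>Candidates 0, 2 and 3 tie. Raising 0 over 2 in the second vote lowers the outdegree of 2 to
that of 3, so 3 also becomes a Copeland winner there and overtakes 0.\<close>
lemma not_monotonic_copeland_approval:
  "\<not> monotonic (approval (copeland :: nat set \<Rightarrow> nat rel \<Rightarrow> nat set))"
proof (rule not_monotonicI[where C = "{0, 1, 2, 3}" and c = 0
   and Ts = "[{(0, 2), (0, 3), (1, 0), (2, 1), (3, 1), (3, 2)},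
              {(1, 0), (2, 0), (2, 1), (2, 3), (3, 0), (3, 1)}]"
   and Ts' = "[{(0, 2), (0, 3), (1, 0), (2, 1), (3, 1), (3, 2)},
               {(0, 2), (1, 0), (2, 1), (2, 3), (3, 0), (3, 1)}]"])
qed (auto simp: election_def tournament_def reinforces_def induced_def
      approval_def approval_score_def copeland_def)

theorem theorem3:
  shows "monotonic (approval (top_cycle :: 'a set \<Rightarrow> 'a rel \<Rightarrow> 'a set))
    \<and> \<not> monotonic (approval (uncovered :: nat set \<Rightarrow> nat rel \<Rightarrow> nat set))
    \<and> \<not> monotonic (approval (copeland :: nat set \<Rightarrow> nat rel \<Rightarrow> nat set))"
  using monotonic_top_cycle_approval not_monotonic_uncovered_approval
    not_monotonic_copeland_approval by blast

end
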